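(* Let $R$ be an associative (unital) ring and let $\sigma\colon R\to R$ be an additive bijection with $\sigma(1)=1$. If $R$ is right Noetherian, then the non-associative skew Laurent series ring $R((X;\sigma))$ is right Noetherian.
   Context: A right ideal of a non-associative ring $S$ is an additive subgroup $I$ with $Is\subseteq I$ for all $s\in S$; $S$ is right Noetherian if it satisfies the ascending chain condition on right ideals. $R((X;\sigma))$ is the set of formal series $\sum_{i\in\mathbb{Z}} r_iX^i$ with $r_i\in R$ and $r_i=0$ for all sufficiently negative $i$, with pointwise addition and multiplication $\left(\sum_m a_mX^m\right)\left(\sum_n b_nX^n\right)=\sum_{k}\left(\sum_{m+n=k}a_m\sigma^m(b_n)\right)X^k$ (finite inner sums), i.e. the extension of $(rX^m)(sX^n)=(r\sigma^m(s))X^{m+n}$ for $r,s\in R$, $m,n\in\mathbb{Z}$, where $\sigma^m$ for $m<0$ is a power of $\sigma^{-1}$; it is a unital, not necessarily associative ring. *)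

theory Defs
  imports Main "HOL-Library.Function_Algebras"
begin

definition right_ideal_in :: "'b::ab_group_add set \<Rightarrow> ('b \<Rightarrow> 'b \<Rightarrow> 'b) \<Rightarrow> 'b set \<Rightarrow> bool" where
  "right_ideal_in S mul I \<longleftrightarrow>
     I \<subseteq> S \<and> 0 \<in> I \<and> (\<forall>x\<in>I. \<forall>y\<in>I. x + y \<in> I) \<and> (\<forall>x\<in>I. - x \<in> I)
     \<and> (\<forall>x\<in>I. \<forall>s\<in>S. mul x s \<in> I)"

definition right_noetherian_in :: "'b::ab_group_add set \<Rightarrow> ('b \<Rightarrow> 'b \<Rightarrow> 'b) \<Rightarrow> bool" where
  "right_noetherian_in S mul \<longleftrightarrow>
     (\<forall>I :: nat \<Rightarrow> 'b set. (\<forall>n. right_ideal_in S mul (I n)) \<and> (\<forall>n. I n \<subseteq> I (Suc n))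
        \<longrightarrow> (\<exists>N. \<forall>n\<ge>N. I n = I N))"

text \<open>Formal Laurent series over R: functions int => R vanishing for all sufficiently
  negative indices; addition is pointwise (Function_Algebras).\<close>

definition laurent_carrier :: "(int \<Rightarrow> 'a::zero) set" where
  "laurent_carrier = {f. \<exists>N. \<forall>i<N. f i = 0}"

definition sigma_pow :: "('a \<Rightarrow> 'a) \<Rightarrow> int \<Rightarrow> 'a \<Rightarrow> 'a" where
  "sigma_pow \<sigma> m = (if 0 \<le> m then \<sigma> ^^ nat m else (inv \<sigma>) ^^ nat (- m))"

text \<open>Multiplication: coefficient k is the (finite) sum over m+n=k of a_m sigma^m(b_n);
  terms with a_m = 0 or b_n = 0 vanish, so we sum over the finite set of relevant m.\<close>

definition laurent_mult :: "('a::ring_1 \<Rightarrow> 'a) \<Rightarrow> (int \<Rightarrow> 'a) \<Rightarrow> (int \<Rightarrow> 'a) \<Rightarrow> (int \<Rightarrow> 'a)" where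
  "laurent_mult \<sigma> f g = (\<lambda>k. \<Sum>m \<in> {m. f m \<noteq> 0 \<and> g (k - m) \<noteq> 0}.
       f m * sigma_pow \<sigma> m (g (k - m)))"

end

theory Submission
  imports Defs
begin

text \<open>Multiplying a series on the right by the monomial \<open>X\<^sup>-\<^sup>k\<close> shifts its coefficients
  without twisting them, because \<open>\<sigma>\<^sup>m(1) = 1\<close>; hence the leading coefficients of a right
  ideal \<open>I\<close> of \<open>R((X;\<sigma>))\<close>, all moved to degree 0, form a right ideal \<open>lead I\<close> of \<open>R\<close>. If \<open>I \<subseteq> J\<close> are right ideals
  with \<open>lead J \<subseteq> lead I\<close>, then \<open>J = I\<close>: \<open>lead I\<close> is generated by the leading coefficients of
  finitely many \<open>F\<^sub>1, \<dots>, F\<^sub>n \<in> I\<close>, so the coefficients of \<open>g \<in> J\<close> can be cancelled one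
  after the other by right multiples \<open>F\<^sub>i \<cdot> c X\<^sup>k\<close>, and the monomials used for each \<open>F\<^sub>i\<close>
  add up to a series \<open>h\<^sub>i\<close> with \<open>g = \<Sum> F\<^sub>i h\<^sub>i \<in> I\<close>. Consequently an ascending chain of right
  ideals stabilises as soon as the chain of their leading coefficient ideals does.\<close>

lemma right_ideal_in_zero: "right_ideal_in S mul I \<Longrightarrow> 0 \<in> I"
  unfolding right_ideal_in_def by blast

lemma right_ideal_in_add: "right_ideal_in S mul I \<Longrightarrow> x \<in> I \<Longrightarrow> y \<in> I \<Longrightarrow> x + y \<in> I"
  unfolding right_ideal_in_def by blast

lemma right_ideal_in_uminus: "right_ideal_in S mul I \<Longrightarrow> x \<in> I \<Longrightarrow> - x \<in> I"
  unfolding right_ideal_in_def by blast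

lemma right_ideal_in_diff: "right_ideal_in S mul I \<Longrightarrow> x \<in> I \<Longrightarrow> y \<in> I \<Longrightarrow> x - y \<in> I"
  using right_ideal_in_add[of S mul I x "- y"] right_ideal_in_uminus[of S mul I y] by simp

lemma right_ideal_in_mul: "right_ideal_in S mul I \<Longrightarrow> x \<in> I \<Longrightarrow> s \<in> S \<Longrightarrow> mul x s \<in> I"
  unfolding right_ideal_in_def by blast

lemma right_ideal_in_subset: "right_ideal_in S mul I \<Longrightarrow> x \<in> I \<Longrightarrow> x \<in> S"
  unfolding right_ideal_in_def by blast

lemma right_ideal_in_sum:
  assumes "right_ideal_in S mul I" "\<And>t. t \<in> T \<Longrightarrow> x t \<in> I"
  shows "(\<Sum>t\<in>T. x t) \<in> I"
  using assms(2)
  by (induction T rule: infinite_finite_induct)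
    (simp_all add: right_ideal_in_zero[OF assms(1)] right_ideal_in_add[OF assms(1)])

definition right_span :: "(nat \<Rightarrow> 'a::ring_1) \<Rightarrow> nat \<Rightarrow> 'a set" where
  "right_span a n = {x. \<exists>c. x = (\<Sum>i<n. a i * c i)}"

lemma right_ideal_in_right_span: "right_ideal_in UNIV (*) (right_span a n)"
  unfolding right_ideal_in_def
proof (intro conjI ballI)
  show "0 \<in> right_span a n" unfolding right_span_def by (auto intro!: exI[of _ "\<lambda>_. 0"])
  fix x assume "x \<in> right_span a n"
  then obtain c where c: "x = (\<Sum>i<n. a i * c i)" unfolding right_span_def by blast
  show "- x \<in> right_span a n" unfolding right_span_def
    by (auto simp: c sum_negf intro!: exI[of _ "\<lambda>i. - c i"])
  fix s :: 'a
  show "x * s \<in> right_span a n" unfolding right_span_def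
    by (auto simp: c sum_distrib_right mult.assoc intro!: exI[of _ "\<lambda>i. c i * s"])
next
  fix x y assume "x \<in> right_span a n" "y \<in> right_span a n"
  then obtain c d where "x = (\<Sum>i<n. a i * c i)" "y = (\<Sum>i<n. a i * d i)"
    unfolding right_span_def by blast
  then show "x + y \<in> right_span a n" unfolding right_span_def
    by (auto simp: sum.distrib distrib_left intro!: exI[of _ "\<lambda>i. c i + d i"])
qed simp

lemma right_span_cong: "(\<And>i. i < n \<Longrightarrow> a i = b i) \<Longrightarrow> right_span a n = right_span b n"
  unfolding right_span_def by auto

lemma right_span_subset_Suc: "right_span a n \<subseteq> right_span a (Suc n)"
proof
  fix x assume "x \<in> right_span a n"
  then obtain c where "x = (\<Sum>i<n. a i * c i)" unfolding right_span_def by blast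
  then have "x = (\<Sum>i<Suc n. a i * (c(n := 0)) i)" by simp
  then show "x \<in> right_span a (Suc n)" unfolding right_span_def by blast
qed

lemma generator_in_right_span: "a n \<in> right_span a (Suc n)"
proof -
  have "a n = (\<Sum>i<Suc n. a i * (if i = n then 1 else 0))" by simp
  then show ?thesis unfolding right_span_def by (intro CollectI exI)
qed

lemma right_noetherian_in_finite_span:
  fixes L :: "'a::ring_1 set"
  assumes "right_noetherian_in (UNIV :: 'a set) (*)"
  shows "\<exists>n a. (\<forall>i<n. a i \<in> L) \<and> L \<subseteq> right_span a n"
proof (rule ccontr)
  assume no_span: "\<not> ?thesis"
  have extend: "\<exists>b. (\<forall>i<Suc n. b i \<in> L) \<and> (\<forall>i<n. b i = a i) \<and> b n \<notin> right_span a n"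
    if a: "\<forall>i<n. a i \<in> L" for n a
  proof -
    obtain x where "x \<in> L" "x \<notin> right_span a n" using no_span a by blast
    then show ?thesis using a by (intro exI[of _ "a(n := x)"]) (auto simp: less_Suc_eq)
  qed
  obtain A where A_in: "\<And>n i. i < n \<Longrightarrow> A n i \<in> L"
    and A_Suc: "\<And>n i. i < n \<Longrightarrow> A (Suc n) i = A n i"
    and A_new: "\<And>n. A (Suc n) n \<notin> right_span (A n) n"
    using dependent_nat_choice[of "\<lambda>n a. \<forall>i<n. a i \<in> L"
        "\<lambda>n a b. (\<forall>i<n. b i = a i) \<and> b n \<notin> right_span a n", OF _ extend]
    by auto
  define J where "J n = right_span (A n) n" for n
  have J_Suc: "right_span (A (Suc n)) n = J n" for n
    unfolding J_def using A_Suc by (rule right_span_cong)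
  have "\<forall>n. right_ideal_in UNIV (*) (J n)"
    unfolding J_def by (simp add: right_ideal_in_right_span)
  moreover have "\<forall>n. J n \<subseteq> J (Suc n)"
    using right_span_subset_Suc J_Suc unfolding J_def by metis
  ultimately have "\<exists>N. \<forall>n\<ge>N. J n = J N"
    using assms unfolding right_noetherian_in_def by (elim allE[of _ J]) blast
  then obtain N where "J (Suc N) = J N" by (metis le_SucI order_refl)
  moreover have "A (Suc N) N \<in> J (Suc N)" unfolding J_def by (rule generator_in_right_span)
  ultimately show False using A_new[of N] unfolding J_def by simp
qed

lemma sum_fun_apply: "(\<Sum>t\<in>T. (H t :: 'b \<Rightarrow> 'c::comm_monoid_add)) k = (\<Sum>t\<in>T. H t k)"
  by (induction T rule: infinite_finite_induct) auto

lemma funpow_additive: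
  fixes f :: "'a::plus \<Rightarrow> 'a"
  assumes "\<And>x y. f (x + y) = f x + f y"
  shows "(f ^^ n) (x + y) = (f ^^ n) x + (f ^^ n) y"
  by (induction n) (simp_all add: assms)

lemma inv_additive:
  assumes "bij f" "\<And>x y. f (x + y) = f x + f y"
  shows "inv f (x + y) = inv f x + inv f y"
proof -
  have "f (inv f x + inv f y) = x + y"
    using assms by (simp add: bij_is_surj surj_f_inv_f)
  then show ?thesis using assms(1) by (metis bij_is_inj inv_f_f)
qed

abbreviation laurent_monom :: "'a::zero \<Rightarrow> int \<Rightarrow> int \<Rightarrow> 'a" where
  "laurent_monom c j \<equiv> (\<lambda>k. if k = j then c else 0)"

lemma laurent_monom_in_carrier: "laurent_monom c j \<in> laurent_carrier"
  unfolding laurent_carrier_def by (auto intro!: exI[of _ j])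

definition lead :: "(int \<Rightarrow> 'a::zero) set \<Rightarrow> 'a set" where
  "lead I = {f 0 | f. f \<in> I \<and> (\<forall>i<0. f i = 0)}"

lemma leadI: "f \<in> I \<Longrightarrow> \<forall>i<0. f i = 0 \<Longrightarrow> f 0 = x \<Longrightarrow> x \<in> lead I"
  unfolding lead_def by blast

lemma lead_mono: "I \<subseteq> J \<Longrightarrow> lead I \<subseteq> lead J"
  unfolding lead_def by blast

locale skew_map =
  fixes \<sigma> :: "'a::ring_1 \<Rightarrow> 'a"
  assumes bij: "bij \<sigma>" and additive: "\<And>x y. \<sigma> (x + y) = \<sigma> x + \<sigma> y" and one: "\<sigma> 1 = 1"
begin

lemma sigma_pow_add: "sigma_pow \<sigma> m (x + y) = sigma_pow \<sigma> m x + sigma_pow \<sigma> m y"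
  unfolding sigma_pow_def
  using funpow_additive[OF additive] funpow_additive[OF inv_additive[OF bij additive]] by auto

lemma sigma_pow_zero: "sigma_pow \<sigma> m 0 = 0"
  using sigma_pow_add[of m 0 0] by simp

lemma sigma_pow_one: "sigma_pow \<sigma> m 1 = 1"
proof -
  have "inv \<sigma> 1 = 1" using bij one by (metis bij_is_inj inv_f_f)
  moreover have "(f ^^ k) 1 = 1" if "f 1 = 1" for f :: "'a \<Rightarrow> 'a" and k
    using that by (induction k) simp_all
  ultimately show ?thesis unfolding sigma_pow_def using one by simp
qed

lemma sigma_pow_exp_zero: "sigma_pow \<sigma> 0 x = x"
  unfolding sigma_pow_def by simp

lemma laurent_mult_monom:
  "laurent_mult \<sigma> f (laurent_monom c j) k = f (k - j) * sigma_pow \<sigma> (k - j) c"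
proof (cases "f (k - j) \<noteq> 0 \<and> c \<noteq> 0")
  case True
  then have "{m. f m \<noteq> 0 \<and> laurent_monom c j (k - m) \<noteq> 0} = {k - j}" by auto
  then show ?thesis unfolding laurent_mult_def by simp
next
  case False
  then have none: "{m. f m \<noteq> 0 \<and> laurent_monom c j (k - m) \<noteq> 0} = {}" by auto
  show ?thesis unfolding laurent_mult_def none using False by (auto simp: sigma_pow_zero)
qed

lemma laurent_mult_eq_sum_interval:
  assumes "\<forall>i<a. f i = 0" "\<forall>i<b. g i = 0"
  shows "laurent_mult \<sigma> f g k = (\<Sum>m\<in>{a..k-b}. f m * sigma_pow \<sigma> m (g (k - m)))"
  unfolding laurent_mult_def
proof (rule sum.mono_neutral_left)
  show "{m. f m \<noteq> 0 \<and> g (k - m) \<noteq> 0} \<subseteq> {a..k - b}"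
    using assms by (auto simp: not_less[symmetric])
qed (auto simp: sigma_pow_zero)

lemma laurent_mult_zero_right: "laurent_mult \<sigma> f 0 = 0"
  unfolding laurent_mult_def by (simp add: zero_fun_def)

lemma laurent_mult_add_right:
  assumes "f \<in> laurent_carrier" "g \<in> laurent_carrier" "h \<in> laurent_carrier"
  shows "laurent_mult \<sigma> f (g + h) = laurent_mult \<sigma> f g + laurent_mult \<sigma> f h"
proof
  fix k
  obtain a b c where a: "\<forall>i<a. f i = 0" and "\<forall>i<b. g i = 0" "\<forall>i<c. h i = 0"
    using assms unfolding laurent_carrier_def by blast
  then have g: "\<forall>i<min b c. g i = 0" and h: "\<forall>i<min b c. h i = 0"
    and gh: "\<forall>i<min b c. (g + h) i = 0"
    by auto
  show "laurent_mult \<sigma> f (g + h) k = (laurent_mult \<sigma> f g + laurent_mult \<sigma> f h) k"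
    unfolding plus_fun_apply laurent_mult_eq_sum_interval[OF a g]
      laurent_mult_eq_sum_interval[OF a h] laurent_mult_eq_sum_interval[OF a gh]
    by (simp add: sigma_pow_add distrib_left sum.distrib)
qed

lemma laurent_mult_cong_right:
  assumes "\<forall>i<a. f i = 0" "\<forall>i<b. g i = 0" "\<forall>i<b. h i = 0" "\<forall>i\<le>k - a. g i = h i"
  shows "laurent_mult \<sigma> f g k = laurent_mult \<sigma> f h k"
  unfolding laurent_mult_eq_sum_interval[OF assms(1,2)] laurent_mult_eq_sum_interval[OF assms(1,3)]
  using assms(4) by (intro sum.cong) auto

lemma right_ideal_in_lead:
  assumes I: "right_ideal_in laurent_carrier (laurent_mult \<sigma>) I"
  shows "right_ideal_in UNIV (*) (lead I)"
  unfolding right_ideal_in_def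
proof (intro conjI ballI)
  show "0 \<in> lead I" using right_ideal_in_zero[OF I] by (intro leadI[of 0]) simp_all
  fix x assume "x \<in> lead I"
  then obtain f where f: "f \<in> I" "\<forall>i<0. f i = 0" "x = f 0" unfolding lead_def by blast
  show "- x \<in> lead I" by (rule leadI[OF right_ideal_in_uminus[OF I f(1)]]) (use f in simp_all)
  fix r :: 'a
  show "x * r \<in> lead I"
    by (rule leadI[OF right_ideal_in_mul[OF I f(1) laurent_monom_in_carrier[where c = r and j = 0]]])
      (use f in \<open>simp_all add: laurent_mult_monom sigma_pow_exp_zero\<close>)
next
  fix x y assume "x \<in> lead I" "y \<in> lead I"
  then obtain f g where "f \<in> I" "\<forall>i<0. f i = 0" "x = f 0" "g \<in> I" "\<forall>i<0. g i = 0" "y = g 0"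
    unfolding lead_def by blast
  then show "x + y \<in> lead I" using right_ideal_in_add[OF I] by (intro leadI[of "f + g"]) auto
qed simp

lemma lowest_coefficient_in_lead:
  assumes J: "right_ideal_in laurent_carrier (laurent_mult \<sigma>) J"
    and e: "e \<in> J" "\<forall>i<k. e i = 0"
  shows "e k \<in> lead J"
proof (rule leadI)
  let ?s = "laurent_mult \<sigma> e (laurent_monom 1 (- k))"
  have shift: "?s i = e (i + k)" for i
    by (simp add: laurent_mult_monom sigma_pow_one)
  show "?s \<in> J" by (rule right_ideal_in_mul[OF J e(1) laurent_monom_in_carrier])
  show "\<forall>i<0. ?s i = 0" using e(2) by (simp add: shift)
  show "?s 0 = e k" by (simp add: shift)
qed

lemma lead_finitely_generated:
  assumes "right_noetherian_in (UNIV :: 'a set) (*)"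
    and I: "right_ideal_in laurent_carrier (laurent_mult \<sigma>) I"
  obtains n F where "\<And>i. i < n \<Longrightarrow> F i \<in> I \<and> (\<forall>j<0. F i j = 0)"
    and "lead I \<subseteq> right_span (\<lambda>i. F i 0) n"
proof -
  obtain n a where a: "\<forall>i<n. a i \<in> lead I" and span: "lead I \<subseteq> right_span a n"
    using right_noetherian_in_finite_span[OF assms(1)] by blast
  have "\<exists>f. f \<in> I \<and> (\<forall>j<0. f j = 0) \<and> f 0 = a i" if "i < n" for i
  proof -
    have "a i \<in> lead I" using a that by blast
    then show ?thesis unfolding lead_def by auto
  qed
  then obtain F where F: "\<And>i. i < n \<Longrightarrow> F i \<in> I \<and> (\<forall>j<0. F i j = 0) \<and> F i 0 = a i"
    by metis
  then have "right_span (\<lambda>i. F i 0) n = right_span a n" by (intro right_span_cong) simp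
  then show thesis using F span by (intro that[of n F]) auto
qed

lemma cancel_lowest_coefficient:
  assumes F: "\<And>i. i < n \<Longrightarrow> \<forall>j<0. F i j = 0"
    and e: "\<forall>j<k. e j = 0" "e k = (\<Sum>i<n. F i 0 * d i)"
  shows "\<forall>j<k + 1. (e - (\<Sum>i<n. laurent_mult \<sigma> (F i) (laurent_monom (d i) k))) j = 0"
proof -
  have coeff: "(\<Sum>i<n. laurent_mult \<sigma> (F i) (laurent_monom (d i) k)) j
      = (\<Sum>i<n. F i (j - k) * sigma_pow \<sigma> (j - k) (d i))" for j
    by (simp add: sum_fun_apply laurent_mult_monom)
  have "(e - (\<Sum>i<n. laurent_mult \<sigma> (F i) (laurent_monom (d i) k))) j = 0" if j: "j < k + 1" for j
  proof -
    consider "j < k" | "j = k" using j by linarith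
    then show ?thesis
    proof cases
      case 1
      then show ?thesis using F e(1) by (auto simp: coeff intro!: sum.neutral)
    next
      case 2
      then show ?thesis by (simp add: coeff e(2) sigma_pow_exp_zero)
    qed
  qed
  then show ?thesis by blast
qed

lemma approximation_step:
  assumes J: "right_ideal_in laurent_carrier (laurent_mult \<sigma>) J"
    and F: "\<And>i. i < n \<Longrightarrow> F i \<in> J \<and> (\<forall>j<0. F i j = 0)"
    and span: "lead J \<subseteq> right_span (\<lambda>i. F i 0) n"
    and g: "g \<in> J"
    and "p \<le> k"
    and c: "\<forall>i. \<forall>j<p. c i j = 0" "\<forall>j<k. g j = (\<Sum>i<n. laurent_mult \<sigma> (F i) (c i)) j"
  shows "\<exists>c'. (\<forall>i. \<forall>j<p. c' i j = 0) \<and> (\<forall>i. \<forall>j<k. c' i j = c i j)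
    \<and> (\<forall>j<k + 1. g j = (\<Sum>i<n. laurent_mult \<sigma> (F i) (c' i)) j)"
proof -
  define comb where "comb c = (\<Sum>i<n. laurent_mult \<sigma> (F i) (c i))" for c
  have F_carrier: "F i \<in> laurent_carrier" if "i < n" for i
    using right_ideal_in_subset[OF J] F that by blast
  have c_carrier: "c i \<in> laurent_carrier" for i
    using c(1) unfolding laurent_carrier_def by blast
  have "comb c \<in> J"
    unfolding comb_def using F
    by (intro right_ideal_in_sum[OF J] right_ideal_in_mul[OF J _ c_carrier]) auto
  then have "g - comb c \<in> J" by (rule right_ideal_in_diff[OF J g])
  moreover have low: "\<forall>j<k. (g - comb c) j = 0" using c(2) unfolding comb_def by simp
  ultimately have "(g - comb c) k \<in> right_span (\<lambda>i. F i 0) n"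
    using lowest_coefficient_in_lead[OF J] span by blast
  then obtain d where d: "(g - comb c) k = (\<Sum>i<n. F i 0 * d i)"
    unfolding right_span_def by blast
  define c' where "c' i = c i + laurent_monom (d i) k" for i
  have "comb c' = comb c + (\<Sum>i<n. laurent_mult \<sigma> (F i) (laurent_monom (d i) k))"
    unfolding comb_def c'_def sum.distrib[symmetric]
    by (intro sum.cong refl laurent_mult_add_right F_carrier c_carrier laurent_monom_in_carrier) simp
  then have "g - comb c' = (g - comb c) - (\<Sum>i<n. laurent_mult \<sigma> (F i) (laurent_monom (d i) k))"
    by (simp add: algebra_simps)
  moreover have "\<forall>j<k + 1. ((g - comb c) - (\<Sum>i<n. laurent_mult \<sigma> (F i) (laurent_monom (d i) k))) j = 0"
    using F by (intro cancel_lowest_coefficient[where F = F and n = n and d = d, OF _ low d]) blast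
  ultimately have "\<forall>j<k + 1. (g - comb c') j = 0" by (simp only:)
  then have "\<forall>j<k + 1. g j = comb c' j" by simp
  moreover have "\<forall>i. \<forall>j<p. c' i j = 0" "\<forall>i. \<forall>j<k. c' i j = c i j"
    using c(1) \<open>p \<le> k\<close> unfolding c'_def by auto
  ultimately show ?thesis unfolding comb_def by blast
qed

lemma sum_eq_of_coherent_approximations:
  assumes F: "\<And>i. i < n \<Longrightarrow> \<forall>j<0. F i j = 0"
    and C_low: "\<And>T i. \<forall>j<p. C T i j = 0"
    and C_Suc: "\<And>T i. \<forall>j<p + int T. C (Suc T) i j = C T i j"
    and approx: "\<And>T. \<forall>j<p + int T. g j = (\<Sum>i<n. laurent_mult \<sigma> (F i) (C T i)) j"
  shows "g = (\<Sum>i<n. laurent_mult \<sigma> (F i) (\<lambda>j. C (Suc (nat (j - p))) i j))"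
proof
  fix K
  have coherent: "C T' i j = C T i j" if "T \<le> T'" "j < p + int T" for T T' i j
    using that(1) by (induction T' rule: dec_induct) (use C_Suc that(2) in auto)
  define T where "T = Suc (nat (K - p))"
  have "C (Suc (nat (j - p))) i j = C T i j" if "j \<le> K" for i j
  proof (cases "j < p")
    case True
    then show ?thesis using C_low by simp
  next
    case False
    then show ?thesis using that coherent[where T = "Suc (nat (j - p))" and T' = T] unfolding T_def by auto
  qed
  then have "laurent_mult \<sigma> (F i) (\<lambda>j. C (Suc (nat (j - p))) i j) K = laurent_mult \<sigma> (F i) (C T i) K"
    if "i < n" for i
    using F[OF that] C_low by (intro laurent_mult_cong_right[where a = 0 and b = p]) auto
  moreover have "g K = (\<Sum>i<n. laurent_mult \<sigma> (F i) (C T i)) K"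
    using approx unfolding T_def by simp
  ultimately show "g K = (\<Sum>i<n. laurent_mult \<sigma> (F i) (\<lambda>j. C (Suc (nat (j - p))) i j)) K"
    by (simp add: sum_fun_apply)
qed

lemma coherent_approximations_exist:
  assumes J: "right_ideal_in laurent_carrier (laurent_mult \<sigma>) J"
    and F: "\<And>i. i < n \<Longrightarrow> F i \<in> J \<and> (\<forall>j<0. F i j = 0)"
    and span: "lead J \<subseteq> right_span (\<lambda>i. F i 0) n"
    and g: "g \<in> J" "\<forall>j<p. g j = 0"
  obtains C where "\<And>T i. \<forall>j<p. C T i j = 0"
    and "\<And>T i. \<forall>j<p + int T. C (Suc T) i j = C T i j"
    and "\<And>T. \<forall>j<p + int T. g j = (\<Sum>i<n. laurent_mult \<sigma> (F i) (C T i)) j"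
proof -
  define approx where "approx T c \<longleftrightarrow> (\<forall>i. \<forall>j<p. c i j = 0)
      \<and> (\<forall>j<p + int T. g j = (\<Sum>i<n. laurent_mult \<sigma> (F i) (c i)) j)" for T c
  have "\<exists>C. \<forall>T. approx T (C T) \<and> (\<forall>i. \<forall>j<p + int T. C (Suc T) i j = C T i j)"
  proof (rule dependent_nat_choice)
    show "\<exists>c. approx 0 c"
      using g(2) by (intro exI[of _ "\<lambda>_. 0"]) (simp add: approx_def laurent_mult_zero_right)
  next
    fix c T assume "approx T c"
    then have "\<forall>i. \<forall>j<p. c i j = 0" "\<forall>j<p + int T. g j = (\<Sum>i<n. laurent_mult \<sigma> (F i) (c i)) j"
      unfolding approx_def by auto
    moreover have "p \<le> p + int T" by simp
    ultimately obtain c' where "\<forall>i. \<forall>j<p. c' i j = 0" "\<forall>i. \<forall>j<p + int T. c' i j = c i j"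
      and "\<forall>j<p + int T + 1. g j = (\<Sum>i<n. laurent_mult \<sigma> (F i) (c' i)) j"
      using approximation_step[where F = F and n = n and p = p and k = "p + int T" and c = c,
          OF J F span g(1)]
      by blast
    then show "\<exists>c'. approx (Suc T) c' \<and> (\<forall>i. \<forall>j<p + int T. c' i j = c i j)"
      unfolding approx_def by (intro exI[of _ c']) (simp add: add.assoc add.commute)
  qed
  then obtain C where C: "\<And>T. approx T (C T)"
    and C_Suc: "\<And>T i. \<forall>j<p + int T. C (Suc T) i j = C T i j"
    by blast
  have "\<And>T i. \<forall>j<p. C T i j = 0"
    and "\<And>T. \<forall>j<p + int T. g j = (\<Sum>i<n. laurent_mult \<sigma> (F i) (C T i)) j"
    using C unfolding approx_def by blast+
  with C_Suc show thesis by (intro that)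
qed

lemma right_ideal_subset_of_lead_subset:
  assumes "right_noetherian_in (UNIV :: 'a set) (*)"
    and I: "right_ideal_in laurent_carrier (laurent_mult \<sigma>) I"
    and J: "right_ideal_in laurent_carrier (laurent_mult \<sigma>) J"
    and "I \<subseteq> J" and "lead J \<subseteq> lead I"
  shows "J \<subseteq> I"
proof
  fix g assume g: "g \<in> J"
  obtain n F where F: "\<And>i. i < n \<Longrightarrow> F i \<in> I \<and> (\<forall>j<0. F i j = 0)"
    and span: "lead I \<subseteq> right_span (\<lambda>i. F i 0) n"
    using lead_finitely_generated[OF assms(1) I] by blast
  obtain p where p: "\<forall>j<p. g j = 0"
    using right_ideal_in_subset[OF J g] unfolding laurent_carrier_def by blast
  have F_J: "\<And>i. i < n \<Longrightarrow> F i \<in> J \<and> (\<forall>j<0. F i j = 0)" using F \<open>I \<subseteq> J\<close> by blast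
  have span_J: "lead J \<subseteq> right_span (\<lambda>i. F i 0) n" using span \<open>lead J \<subseteq> lead I\<close> by blast
  obtain C where C_low: "\<And>T i. \<forall>j<p. C T i j = 0"
    and C_Suc: "\<And>T i. \<forall>j<p + int T. C (Suc T) i j = C T i j"
    and C_approx: "\<And>T. \<forall>j<p + int T. g j = (\<Sum>i<n. laurent_mult \<sigma> (F i) (C T i)) j"
    using coherent_approximations_exist[OF J F_J span_J g p] by blast
  define h where "h i j = C (Suc (nat (j - p))) i j" for i j
  have "g = (\<Sum>i<n. laurent_mult \<sigma> (F i) (h i))"
    unfolding h_def using F by (intro sum_eq_of_coherent_approximations[OF _ C_low C_Suc C_approx]) blast
  also have "\<dots> \<in> I"
  proof (intro right_ideal_in_sum[OF I] right_ideal_in_mul[OF I])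
    show "h i \<in> laurent_carrier" for i
      unfolding laurent_carrier_def h_def using C_low by blast
  qed (use F in blast)
  finally show "g \<in> I" .
qed

end

theorem theorem20:
  fixes \<sigma> :: "'a::ring_1 \<Rightarrow> 'a"
  assumes "bij \<sigma>"
    and "\<And>x y. \<sigma> (x + y) = \<sigma> x + \<sigma> y"
    and "\<sigma> 1 = 1"
    and "right_noetherian_in (UNIV :: 'a set) (*)"
  shows "right_noetherian_in (laurent_carrier :: (int \<Rightarrow> 'a) set) (laurent_mult \<sigma>)"
  unfolding right_noetherian_in_def
proof (intro allI impI)
  interpret skew_map \<sigma> using assms(1-3) by unfold_locales
  fix I :: "nat \<Rightarrow> (int \<Rightarrow> 'a) set"
  assume "(\<forall>n. right_ideal_in laurent_carrier (laurent_mult \<sigma>) (I n)) \<and> (\<forall>n. I n \<subseteq> I (Suc n))"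
  then have ideal: "\<And>n. right_ideal_in laurent_carrier (laurent_mult \<sigma>) (I n)"
    and chain: "\<And>m n. m \<le> n \<Longrightarrow> I m \<subseteq> I n"
    using lift_Suc_mono_le[of I] by auto
  have "\<forall>n. right_ideal_in UNIV (*) (lead (I n))" using ideal right_ideal_in_lead by blast
  moreover have "\<forall>n. lead (I n) \<subseteq> lead (I (Suc n))" by (intro allI lead_mono chain) simp
  ultimately have "\<exists>N. \<forall>n\<ge>N. lead (I n) = lead (I N)"
    using assms(4) unfolding right_noetherian_in_def by (elim allE[of _ "\<lambda>n. lead (I n)"]) blast
  then obtain N where N: "\<And>n. N \<le> n \<Longrightarrow> lead (I n) = lead (I N)" by blast
  have "I n = I N" if "N \<le> n" for n
    using right_ideal_subset_of_lead_subset[OF assms(4) ideal ideal chain[OF that]] N[OF that] chain[OF that]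
    by auto
  then show "\<exists>N. \<forall>n\<ge>N. I n = I N" by blast
qed

end
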